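(* Let $\mathcal M$ be a category with chosen finite products which form a strict monoidal structure on $\mathcal M$. A simplicial object $X\colon\Delta^{op}\to\mathcal M$ is the reduced bar construction based on some monoid in $\mathcal M$ if and only if for every $n\ge0$ the arrow $p_n\colon X_n\to(X_1)^n$ is the identity (in particular $X_n=(X_1)^n$).
   Context: $\mathcal M$ has chosen finite products forming a strict monoidal structure: the chosen binary product is strictly associative on objects and arrows, and the chosen terminal object $A^0$ is a strict unit. $A^n$ denotes the $n$-fold chosen product. For arrows $g_j\colon C\to A_j$, $\langle g_1,\dots,g_n\rangle\colon C\to A_1\times\dots\times A_n$ is the induced arrow. A monoid is $(M,\mu\colon M\times M\to M,\eta\colon M^0\to M)$ with $\mu\circ(\mu\times 1_M)=\mu\circ(1_M\times\mu)$ and $\mu\circ(1_M\times\eta)=1_M=\mu\circ(\eta\times 1_M)$. $\Delta^{op}$ is the opposite of the category whose objects are $[n]=\{0,\dots,n\}$, $n\ge0$, and whose arrows are order-preserving maps. A simplicial object is a functor $X\colon\Delta^{op}\to\mathcal M$, $X_n:=X([n])$. For $n\ge2$ and $1\le j\le n$, $i_j\colon[n]\to[1]$ is the arrow of $\Delta^{op}$ opposite to the map $[1]\to[n]$, $0\mapsto j-1$, $1\mapsto j$. Define $p_0\colon X_0\to(X_1)^0$ as the unique arrow, $p_1=1_{X_1}$, and for $n\ge2$, $p_n=\langle X(i_1),\dots,X(i_n)\rangle\colon X_n\to(X_1)^n$. Reduced bar construction based on a monoid $M$: the simplicial object $B$ with $B_n=M^n$, defined on an arrow $\varphi=f^{op}\colon[m]\to[n]$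 of $\Delta^{op}$ (with $f\colon[n]\to[m]$ order-preserving) as follows. Put $c(a)=\#\{i\in[n]: f(i)<a\}$ for $1\le a\le m$, and let $h(a)=c(a)$ if $1\le c(a)\le n$ and $h(a)$ undefined otherwise. Then $B(\varphi)\colon M^m\to M^n$ is the arrow whose $b$-th component ($1\le b\le n$) is the product, computed with $\mu$ in increasing order of $a$, of the projections $M^m\to M$ onto the coordinates $a$ with $h(a)=b$, and is $\eta\circ(\text{unique arrow }M^m\to M^0)$ if there is no such $a$. *)

theory Defs
  imports Main
begin

record ('o,'a) category =
  Obj :: "'o set"
  Arr :: "'a set"
  Dom :: "'a \<Rightarrow> 'o"
  Cod :: "'a \<Rightarrow> 'o"
  Id  :: "'o \<Rightarrow> 'a"
  Comp :: "'a \<Rightarrow> 'a \<Rightarrow> 'a"  (* Comp C g f = g o f *)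

definition hom :: "('o,'a) category \<Rightarrow> 'o \<Rightarrow> 'o \<Rightarrow> 'a set" where
  "hom C A B = {f \<in> Arr C. Dom C f = A \<and> Cod C f = B}"

definition is_category :: "('o,'a) category \<Rightarrow> bool" where
  "is_category C \<longleftrightarrow>
     (\<forall>A\<in>Obj C. Id C A \<in> hom C A A) \<and>
     (\<forall>f\<in>Arr C. Dom C f \<in> Obj C \<and> Cod C f \<in> Obj C) \<and>
     (\<forall>f\<in>Arr C. \<forall>g\<in>Arr C. Cod C f = Dom C g \<longrightarrow>
         Comp C g f \<in> hom C (Dom C f) (Cod C g)) \<and>
     (\<forall>f\<in>Arr C. Comp C f (Id C (Dom C f)) = f \<and> Comp C (Id C (Cod C f)) f = f) \<and>
     (\<forall>f\<in>Arr C. \<forall>g\<in>Arr C. \<forall>h\<in>Arr C. Cod C f = Dom C g \<longrightarrow> Cod C g = Dom C h \<longrightarrow>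
         Comp C h (Comp C g f) = Comp C (Comp C h g) f)"

record ('o,'a) products =
  Prod :: "'o \<Rightarrow> 'o \<Rightarrow> 'o"
  Term :: "'o"
  Pr1  :: "'o \<Rightarrow> 'o \<Rightarrow> 'a"
  Pr2  :: "'o \<Rightarrow> 'o \<Rightarrow> 'a"
  Pair :: "'a \<Rightarrow> 'a \<Rightarrow> 'a"
  Bang :: "'o \<Rightarrow> 'a"

definition has_chosen_products :: "('o,'a) category \<Rightarrow> ('o,'a) products \<Rightarrow> bool" where
  "has_chosen_products C P \<longleftrightarrow>
     Term P \<in> Obj C \<and>
     (\<forall>A\<in>Obj C. Bang P A \<in> hom C A (Term P) \<and> (\<forall>h\<in>hom C A (Term P). h = Bang P A)) \<and>
     (\<forall>A\<in>Obj C. \<forall>B\<in>Obj C.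
        Prod P A B \<in> Obj C \<and>
        Pr1 P A B \<in> hom C (Prod P A B) A \<and>
        Pr2 P A B \<in> hom C (Prod P A B) B \<and>
        (\<forall>D\<in>Obj C. \<forall>f\<in>hom C D A. \<forall>g\<in>hom C D B.
           Pair P f g \<in> hom C D (Prod P A B) \<and>
           Comp C (Pr1 P A B) (Pair P f g) = f \<and>
           Comp C (Pr2 P A B) (Pair P f g) = g \<and>
           (\<forall>h\<in>hom C D (Prod P A B).
              Comp C (Pr1 P A B) h = f \<longrightarrow> Comp C (Pr2 P A B) h = g \<longrightarrow> h = Pair P f g)))"

definition prod_arr :: "('o,'a) category \<Rightarrow> ('o,'a) products \<Rightarrow> 'a \<Rightarrow> 'a \<Rightarrow> 'a" where
  "prod_arr C P f g =
     Pair P (Comp C f (Pr1 P (Dom C f) (Dom C g))) (Comp C g (Pr2 P (Dom C f) (Dom C g)))"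

text \<open>The chosen products form a strict monoidal structure: strictly associative on
  objects and arrows, the terminal object is a strict unit, and the canonical
  associator and unitors are identities.\<close>
definition strict_cartesian :: "('o,'a) category \<Rightarrow> ('o,'a) products \<Rightarrow> bool" where
  "strict_cartesian C P \<longleftrightarrow>
     is_category C \<and> has_chosen_products C P \<and>
     (\<forall>A\<in>Obj C. \<forall>B\<in>Obj C. \<forall>D\<in>Obj C.
        Prod P (Prod P A B) D = Prod P A (Prod P B D) \<and>
        Pair P (Comp C (Pr1 P A B) (Pr1 P (Prod P A B) D))
               (Pair P (Comp C (Pr2 P A B) (Pr1 P (Prod P A B) D)) (Pr2 P (Prod P A B) D))
          = Id C (Prod P (Prod P A B) D)) \<and>
     (\<forall>f\<in>Arr C. \<forall>g\<in>Arr C. \<forall>h\<in>Arr C.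
        prod_arr C P (prod_arr C P f g) h = prod_arr C P f (prod_arr C P g h)) \<and>
     (\<forall>A\<in>Obj C. Prod P (Term P) A = A \<and> Prod P A (Term P) = A \<and>
        Pr2 P (Term P) A = Id C A \<and> Pr1 P A (Term P) = Id C A) \<and>
     (\<forall>f\<in>Arr C. prod_arr C P (Id C (Term P)) f = f \<and> prod_arr C P f (Id C (Term P)) = f)"

fun pow :: "('o,'a) products \<Rightarrow> 'o \<Rightarrow> nat \<Rightarrow> 'o" where
  "pow P A 0 = Term P"
| "pow P A (Suc 0) = A"
| "pow P A (Suc (Suc n)) = Prod P A (pow P A (Suc n))"

text \<open>Induced arrow <g1,...,gn> : D \<rightarrow> A1 \<times> ... \<times> An (D is the common domain,
  needed for n = 0, where the result is the unique arrow to the terminal object).\<close>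
fun tuple :: "('o,'a) products \<Rightarrow> 'o \<Rightarrow> 'a list \<Rightarrow> 'a" where
  "tuple P D [] = Bang P D"
| "tuple P D [g] = g"
| "tuple P D (g # h # gs) = Pair P g (tuple P D (h # gs))"

text \<open>Projection A^n \<rightarrow> A onto coordinate a (1 \<le> a \<le> n).\<close>
fun proj :: "('o,'a) category \<Rightarrow> ('o,'a) products \<Rightarrow> 'o \<Rightarrow> nat \<Rightarrow> nat \<Rightarrow> 'a" where
  "proj C P A 0 a = undefined"
| "proj C P A (Suc 0) a = Id C A"
| "proj C P A (Suc (Suc n)) a =
     (if a \<le> 1 then Pr1 P A (pow P A (Suc n))
      else Comp C (proj C P A (Suc n) (a - 1)) (Pr2 P A (pow P A (Suc n))))"

definition is_monoid :: "('o,'a) category \<Rightarrow> ('o,'a) products \<Rightarrow> 'o \<Rightarrow> 'a \<Rightarrow> 'a \<Rightarrow> bool" where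
  "is_monoid C P M mu eta \<longleftrightarrow>
     M \<in> Obj C \<and> mu \<in> hom C (Prod P M M) M \<and> eta \<in> hom C (pow P M 0) M \<and>
     Comp C mu (prod_arr C P mu (Id C M)) = Comp C mu (prod_arr C P (Id C M) mu) \<and>
     Comp C mu (prod_arr C P (Id C M) eta) = Id C M \<and>
     Comp C mu (prod_arr C P eta (Id C M)) = Id C M"

fun mprod :: "('o,'a) category \<Rightarrow> ('o,'a) products \<Rightarrow> 'a \<Rightarrow> 'a \<Rightarrow> 'o \<Rightarrow> 'a list \<Rightarrow> 'a" where
  "mprod C P mu eta D [] = Comp C eta (Bang P D)"
| "mprod C P mu eta D [f] = f"
| "mprod C P mu eta D (f # g # fs) = Comp C mu (Pair P f (mprod C P mu eta D (g # fs)))"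

text \<open>An order-preserving map f : [n] \<rightarrow> [m], represented by a function on nat
  (only its values on {0..n} matter).  The corresponding arrow of \<Delta>^op goes [m] \<rightarrow> [n].\<close>
definition delta_arr :: "nat \<Rightarrow> nat \<Rightarrow> (nat \<Rightarrow> nat) \<Rightarrow> bool" where
  "delta_arr n m f \<longleftrightarrow> (\<forall>i\<le>n. f i \<le> m) \<and> (\<forall>i j. i \<le> j \<longrightarrow> j \<le> n \<longrightarrow> f i \<le> f j)"

text \<open>Simplicial object: Xo n = X_n, and Xa n m f = X(f^op) : X_m \<rightarrow> X_n for f : [n] \<rightarrow> [m].\<close>
definition simplicial_object ::
  "('o,'a) category \<Rightarrow> (nat \<Rightarrow> 'o) \<Rightarrow> (nat \<Rightarrow> nat \<Rightarrow> (nat \<Rightarrow> nat) \<Rightarrow> 'a) \<Rightarrow> bool" where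
  "simplicial_object C Xo Xa \<longleftrightarrow>
     (\<forall>n. Xo n \<in> Obj C) \<and>
     (\<forall>n m f. delta_arr n m f \<longrightarrow> Xa n m f \<in> hom C (Xo m) (Xo n)) \<and>
     (\<forall>n m f g. delta_arr n m f \<longrightarrow> (\<forall>i\<le>n. f i = g i) \<longrightarrow> Xa n m f = Xa n m g) \<and>
     (\<forall>n. Xa n n id = Id C (Xo n)) \<and>
     (\<forall>n m k f g. delta_arr n m f \<longrightarrow> delta_arr m k g \<longrightarrow>
        Xa n k (g \<circ> f) = Comp C (Xa n m f) (Xa m k g))"

definition cnt :: "nat \<Rightarrow> (nat \<Rightarrow> nat) \<Rightarrow> nat \<Rightarrow> nat" where
  "cnt n f a = card {i. i \<le> n \<and> f i < a}"

definition bar_arr ::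
  "('o,'a) category \<Rightarrow> ('o,'a) products \<Rightarrow> 'o \<Rightarrow> 'a \<Rightarrow> 'a \<Rightarrow> nat \<Rightarrow> nat \<Rightarrow> (nat \<Rightarrow> nat) \<Rightarrow> 'a" where
  "bar_arr C P M mu eta n m f =
     tuple P (pow P M m)
       (map (\<lambda>b. mprod C P mu eta (pow P M m)
                    (map (\<lambda>a. proj C P M m a) (filter (\<lambda>a. cnt n f a = b) [1..<m+1])))
            [1..<n+1])"

definition is_reduced_bar ::
  "('o,'a) category \<Rightarrow> ('o,'a) products \<Rightarrow> (nat \<Rightarrow> 'o) \<Rightarrow> (nat \<Rightarrow> nat \<Rightarrow> (nat \<Rightarrow> nat) \<Rightarrow> 'a) \<Rightarrow> bool" where
  "is_reduced_bar C P Xo Xa \<longleftrightarrow>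
     (\<exists>M mu eta. is_monoid C P M mu eta \<and>
        (\<forall>n. Xo n = pow P M n) \<and>
        (\<forall>n m f. delta_arr n m f \<longrightarrow> Xa n m f = bar_arr C P M mu eta n m f))"

text \<open>i_j : [n] \<rightarrow> [1] in \<Delta>^op is opposite to 0 \<mapsto> j-1, 1 \<mapsto> j.\<close>
definition p_arr ::
  "('o,'a) category \<Rightarrow> ('o,'a) products \<Rightarrow> (nat \<Rightarrow> 'o) \<Rightarrow> (nat \<Rightarrow> nat \<Rightarrow> (nat \<Rightarrow> nat) \<Rightarrow> 'a) \<Rightarrow> nat \<Rightarrow> 'a" where
  "p_arr C P Xo Xa n =
     (if n = 0 then Bang P (Xo 0)
      else if n = 1 then Id C (Xo 1)
      else tuple P (Xo n) (map (\<lambda>j. Xa 1 n (\<lambda>i. if i = 0 then j - 1 else j)) [1..<n+1]))"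

end

theory Submission
  imports Defs
begin

text \<open>
  In the bar construction the spine edge \<open>i\<^sub>j\<close> acts as the \<open>j\<close>-th projection, so \<open>p\<^sub>n\<close> is the
  tuple of all projections, i.e. the identity.

  Conversely, if every \<open>p\<^sub>n\<close> is the identity, an arrow \<open>X(f) : X\<^sub>m \<rightarrow> X\<^sub>n\<close> is the tuple of its
  composites with the spine edges, i.e. of the values of \<open>X\<close> on edges \<open>u \<rightarrow> v\<close> of \<open>[m]\<close>.
  Put \<open>\<mu> = X(0 \<rightarrow> 2)\<close> and \<open>\<eta> = X([1] \<rightarrow> [0])\<close>. An edge with \<open>v \<ge> u + 2\<close> factors through the
  inner face of the 2-simplex \<open>(u, u+1, v)\<close>, so by induction \<open>X(u \<rightarrow> v)\<close> is the \<open>\<mu>\<close>-product of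
  the projections \<open>u+1, \<dots>, v\<close>: this is the reduced bar construction. The monoid laws are
  functoriality of \<open>X\<close> on the composites of \<open>0 \<rightarrow> 2\<close> with the 2-simplices
  \<open>(0,2,3)\<close>, \<open>(0,1,3)\<close>, \<open>(0,1,1)\<close> and \<open>(0,0,1)\<close>.
\<close>

declare upt_Suc [simp del]

lemma filter_between_upt:
  "r \<le> m \<Longrightarrow> filter (\<lambda>a. l < a \<and> a \<le> r) [1..<m+1] = [Suc l..<Suc r]"
  by (rule sorted_distinct_set_unique) (auto simp: sorted_wrt_filter)

lemma cnt_eq_iff:
  assumes f: "delta_arr n m f" and b: "1 \<le> b" "b \<le> n"
  shows "cnt n f a = b \<longleftrightarrow> f (b - 1) < a \<and> a \<le> f b"
proof -
  have mono: "\<And>i j. i \<le> j \<Longrightarrow> j \<le> n \<Longrightarrow> f i \<le> f j"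
    using f unfolding delta_arr_def by blast
  let ?S = "{i. i \<le> n \<and> f i < a}"
  show ?thesis
  proof
    assume cnt: "cnt n f a = b"
    have "f (b - 1) < a"
    proof (rule ccontr)
      assume small: "\<not> f (b - 1) < a"
      have "?S \<subseteq> {..<b - 1}"
      proof
        fix i assume "i \<in> ?S"
        then show "i \<in> {..<b - 1}" using mono[of "b - 1" i] small by (cases "b - 1 \<le> i") auto
      qed
      then have "card ?S \<le> b - 1"
        by (metis card_lessThan card_mono finite_lessThan)
      then show False using cnt b unfolding cnt_def by simp
    qed
    moreover have "a \<le> f b"
    proof (rule ccontr)
      assume "\<not> a \<le> f b"
      then have "{..b} \<subseteq> ?S"
        using mono[of _ b] b by (auto simp: not_le intro: le_less_trans)
      then have "card {..b} \<le> card ?S" by (intro card_mono) auto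
      then show False using cnt unfolding cnt_def by simp
    qed
    ultimately show "f (b - 1) < a \<and> a \<le> f b" ..
  next
    assume a: "f (b - 1) < a \<and> a \<le> f b"
    have "?S = {..<b}"
    proof (intro set_eqI iffI)
      fix i assume "i \<in> ?S"
      then show "i \<in> {..<b}" using mono[of b i] a b by (cases "b \<le> i") auto
    next
      fix i assume "i \<in> {..<b}"
      then have "i \<le> b - 1" "b - 1 \<le> n" using b by auto
      then show "i \<in> ?S" using mono[of i "b - 1"] a by (auto intro: le_less_trans)
    qed
    then show "cnt n f a = b" unfolding cnt_def by simp
  qed
qed

lemma filter_cnt_eq:
  assumes f: "delta_arr n m f" and b: "1 \<le> b" "b \<le> n"
  shows "filter (\<lambda>a. cnt n f a = b) [1..<m+1] = [Suc (f (b - 1))..<Suc (f b)]"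
proof -
  have "filter (\<lambda>a. cnt n f a = b) [1..<m+1] = filter (\<lambda>a. f (b - 1) < a \<and> a \<le> f b) [1..<m+1]"
    using cnt_eq_iff[OF f b] by (intro filter_cong) auto
  also have "\<dots> = [Suc (f (b - 1))..<Suc (f b)]"
    using f b unfolding delta_arr_def by (intro filter_between_upt) auto
  finally show ?thesis .
qed

lemma bar_arr_eq_intervals:
  assumes "delta_arr n m f"
  shows "bar_arr C P M mu eta n m f =
    tuple P (pow P M m)
      (map (\<lambda>b. mprod C P mu eta (pow P M m) (map (proj C P M m) [Suc (f (b - 1))..<Suc (f b)]))
        [1..<n+1])"
  unfolding bar_arr_def using filter_cnt_eq[OF assms] by (intro arg_cong[where f = "tuple _ _"] map_cong) auto

definition simplex_edge :: "nat \<Rightarrow> nat \<Rightarrow> nat \<Rightarrow> nat" where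
  "simplex_edge u v = (\<lambda>i. if i = 0 then u else v)"

lemma delta_arr_simplex_edge: "u \<le> v \<Longrightarrow> v \<le> m \<Longrightarrow> delta_arr 1 m (simplex_edge u v)"
  unfolding delta_arr_def simplex_edge_def by auto

lemma comp_simplex_edge: "f \<circ> simplex_edge u v = simplex_edge (f u) (f v)"
  unfolding simplex_edge_def by auto

lemma delta_arr_comp: "delta_arr n m f \<Longrightarrow> delta_arr m k g \<Longrightarrow> delta_arr n k (g \<circ> f)"
  unfolding delta_arr_def by auto

lemma bar_arr_simplex_edge:
  "u \<le> v \<Longrightarrow> v \<le> m \<Longrightarrow> bar_arr C P M mu eta 1 m (simplex_edge u v)
     = mprod C P mu eta (pow P M m) (map (proj C P M m) [Suc u..<Suc v])"
  using bar_arr_eq_intervals[OF delta_arr_simplex_edge] by (simp add: simplex_edge_def upt_conv_Cons)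

lemma p_arr_eq_tuple:
  "2 \<le> n \<Longrightarrow> p_arr C P Xo Xa n = tuple P (Xo n) (map (\<lambda>j. Xa 1 n (simplex_edge (j - 1) j)) [1..<n+1])"
  unfolding p_arr_def simplex_edge_def by (rule if_not_P[THEN trans]) auto

locale cartesian_category =
  fixes C :: "('o,'a) category" and P :: "('o,'a) products"
  assumes category: "is_category C" and products: "has_chosen_products C P"
begin

lemma id_hom: "A \<in> Obj C \<Longrightarrow> Id C A \<in> hom C A A"
  using category unfolding is_category_def by blast

lemma hom_objs: "f \<in> hom C A B \<Longrightarrow> A \<in> Obj C \<and> B \<in> Obj C"
  using category unfolding is_category_def hom_def by blast

lemma comp_hom: "f \<in> hom C A B \<Longrightarrow> g \<in> hom C B D \<Longrightarrow> Comp C g f \<in> hom C A D"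
  using category unfolding is_category_def hom_def by auto

lemma comp_id_left: "f \<in> hom C A B \<Longrightarrow> Comp C (Id C B) f = f"
  using category unfolding is_category_def hom_def by auto

lemma comp_id_right: "f \<in> hom C A B \<Longrightarrow> Comp C f (Id C A) = f"
  using category unfolding is_category_def hom_def by auto

lemma comp_assoc:
  "f \<in> hom C A B \<Longrightarrow> g \<in> hom C B D \<Longrightarrow> h \<in> hom C D E \<Longrightarrow>
   Comp C h (Comp C g f) = Comp C (Comp C h g) f"
  using category unfolding is_category_def hom_def by auto

lemma term_obj: "Term P \<in> Obj C"
  using products unfolding has_chosen_products_def by blast

lemma bang_hom: "A \<in> Obj C \<Longrightarrow> Bang P A \<in> hom C A (Term P)"
  using products unfolding has_chosen_products_def by blast

lemma bang_unique: "h \<in> hom C A (Term P) \<Longrightarrow> h = Bang P A"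
  using products hom_objs unfolding has_chosen_products_def by blast

lemma prod_obj: "A \<in> Obj C \<Longrightarrow> B \<in> Obj C \<Longrightarrow> Prod P A B \<in> Obj C"
  using products unfolding has_chosen_products_def by blast

lemma pr1_hom: "A \<in> Obj C \<Longrightarrow> B \<in> Obj C \<Longrightarrow> Pr1 P A B \<in> hom C (Prod P A B) A"
  using products unfolding has_chosen_products_def by blast

lemma pr2_hom: "A \<in> Obj C \<Longrightarrow> B \<in> Obj C \<Longrightarrow> Pr2 P A B \<in> hom C (Prod P A B) B"
  using products unfolding has_chosen_products_def by blast

lemma pair_hom: "f \<in> hom C D A \<Longrightarrow> g \<in> hom C D B \<Longrightarrow> Pair P f g \<in> hom C D (Prod P A B)"
  using products hom_objs unfolding has_chosen_products_def by blast

lemma pr1_pair: "f \<in> hom C D A \<Longrightarrow> g \<in> hom C D B \<Longrightarrow> Comp C (Pr1 P A B) (Pair P f g) = f"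
  using products hom_objs unfolding has_chosen_products_def by blast

lemma pr2_pair: "f \<in> hom C D A \<Longrightarrow> g \<in> hom C D B \<Longrightarrow> Comp C (Pr2 P A B) (Pair P f g) = g"
  using products hom_objs unfolding has_chosen_products_def by blast

lemma pair_expand:
  assumes h: "h \<in> hom C D (Prod P A B)" and A: "A \<in> Obj C" and B: "B \<in> Obj C"
  shows "h = Pair P (Comp C (Pr1 P A B) h) (Comp C (Pr2 P A B) h)"
proof -
  have "Comp C (Pr1 P A B) h \<in> hom C D A" "Comp C (Pr2 P A B) h \<in> hom C D B"
    using comp_hom[OF h] pr1_hom[OF A B] pr2_hom[OF A B] by auto
  then show ?thesis
    using products A B h hom_objs[OF h] unfolding has_chosen_products_def by blast
qed

lemma pow_obj:
  assumes A: "A \<in> Obj C"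
  shows "pow P A n \<in> Obj C"
proof -
  have "pow P A (Suc k) \<in> Obj C" for k
    by (induction k) (simp_all add: A prod_obj)
  then show ?thesis by (cases n) (simp_all add: term_obj)
qed

lemma proj_hom:
  assumes A: "A \<in> Obj C" and j: "1 \<le> j" "j \<le> n"
  shows "proj C P A n j \<in> hom C (pow P A n) A"
proof -
  have "proj C P A (Suc k) j \<in> hom C (pow P A (Suc k)) A" if "1 \<le> j" "j \<le> Suc k" for k j
    using that
  proof (induction k arbitrary: j)
    case (Suc k)
    then show ?case
      by (auto simp: A pr1_hom pow_obj intro: comp_hom[OF pr2_hom])
  qed (simp add: A id_hom)
  then show ?thesis using j by (cases n) auto
qed

lemma tuple_hom:
  "gs \<noteq> [] \<Longrightarrow> \<forall>g\<in>set gs. g \<in> hom C D A \<Longrightarrow> tuple P D gs \<in> hom C D (pow P A (length gs))"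
  by (induction gs rule: induct_list012) (auto intro!: pair_hom)

lemma proj_tuple:
  assumes "\<forall>g\<in>set gs. g \<in> hom C D A" "A \<in> Obj C" "1 \<le> j" "j \<le> length gs"
  shows "Comp C (proj C P A (length gs) j) (tuple P D gs) = gs ! (j - 1)"
  using assms
proof (induction gs arbitrary: j rule: induct_list012)
  case (2 x)
  then show ?case by (simp add: comp_id_left)
next
  case (3 x y zs)
  let ?Q = "pow P A (Suc (length zs))"
  have x: "x \<in> hom C D A" and rest: "tuple P D (y # zs) \<in> hom C D ?Q"
    using 3(3) tuple_hom[of "y # zs" D A] by auto
  show ?case
  proof (cases "j = 1")
    case True
    then show ?thesis using pr1_pair[OF x rest] by simp
  next
    case False
    then have j: "1 \<le> j - 1" "j - 1 \<le> Suc (length zs)" using 3(5,6) by auto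
    have "Comp C (proj C P A (length (x # y # zs)) j) (tuple P D (x # y # zs))
        = Comp C (proj C P A (Suc (length zs)) (j - 1))
            (Comp C (Pr2 P A ?Q) (Pair P x (tuple P D (y # zs))))"
      using False 3(5) comp_assoc[OF pair_hom[OF x rest] pr2_hom[OF 3(4) pow_obj[OF 3(4)]]
          proj_hom[OF 3(4) j]]
      by simp
    also have "\<dots> = (y # zs) ! (j - 1 - 1)"
      using pr2_pair[OF x rest] 3(2)[of "j - 1"] 3(3,4) j by simp
    finally show ?thesis using 3(5) False by (cases j) auto
  qed
qed simp

lemma pow_arr_eqI:
  assumes A: "A \<in> Obj C" and n: "1 \<le> n"
    and h: "h \<in> hom C D (pow P A n)" and k: "k \<in> hom C D (pow P A n)"
    and projs: "\<And>j. 1 \<le> j \<Longrightarrow> j \<le> n \<Longrightarrow> Comp C (proj C P A n j) h = Comp C (proj C P A n j) k"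
  shows "h = k"
proof -
  have "h = k" if "h \<in> hom C D (pow P A (Suc l))" "k \<in> hom C D (pow P A (Suc l))"
    "\<And>j. 1 \<le> j \<Longrightarrow> j \<le> Suc l \<Longrightarrow>
        Comp C (proj C P A (Suc l) j) h = Comp C (proj C P A (Suc l) j) k" for l h k
    using that
  proof (induction l arbitrary: h k)
    case 0
    then show ?case using comp_id_left[of h D A] comp_id_left[of k D A] by auto
  next
    case (Suc l)
    let ?Q = "pow P A (Suc l)"
    have pr2: "Pr2 P A ?Q \<in> hom C (Prod P A ?Q) ?Q" using pr2_hom[OF A pow_obj[OF A]] .
    have "Comp C (proj C P A (Suc l) j) (Comp C (Pr2 P A ?Q) h)
        = Comp C (proj C P A (Suc l) j) (Comp C (Pr2 P A ?Q) k)"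
      if "1 \<le> j" "j \<le> Suc l" for j
      using Suc.prems(3)[of "Suc j"] that comp_assoc[OF _ pr2 proj_hom[OF A that]] Suc.prems(1,2)
      by simp
    then have "Comp C (Pr2 P A ?Q) h = Comp C (Pr2 P A ?Q) k"
      using Suc.IH comp_hom[OF _ pr2] Suc.prems(1,2) by simp
    moreover have "Comp C (Pr1 P A ?Q) h = Comp C (Pr1 P A ?Q) k"
      using Suc.prems(3)[of 1] by simp
    ultimately show ?case
      using pair_expand[of h D A ?Q] pair_expand[of k D A ?Q] Suc.prems(1,2) A pow_obj[OF A] by simp
  qed
  then show ?thesis using n h k projs by (cases n) auto
qed

lemma tuple_unique:
  assumes "\<forall>g\<in>set gs. g \<in> hom C D A" "gs \<noteq> []" "A \<in> Obj C"
    and "k \<in> hom C D (pow P A (length gs))"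
    and "\<And>j. 1 \<le> j \<Longrightarrow> j \<le> length gs \<Longrightarrow> Comp C (proj C P A (length gs) j) k = gs ! (j - 1)"
  shows "k = tuple P D gs"
proof (rule pow_arr_eqI[where n = "length gs"])
  show "tuple P D gs \<in> hom C D (pow P A (length gs))" using assms(2,1) by (rule tuple_hom)
  show "Comp C (proj C P A (length gs) j) k = Comp C (proj C P A (length gs) j) (tuple P D gs)"
    if "1 \<le> j" "j \<le> length gs" for j
    using assms(5)[OF that] proj_tuple[OF assms(1,3) that] by simp
qed (use assms in \<open>auto simp: Suc_le_eq\<close>)

lemma tuple_projs:
  assumes "A \<in> Obj C" "1 \<le> n"
  shows "tuple P (pow P A n) (map (proj C P A n) [1..<n+1]) = Id C (pow P A n)"
proof (rule tuple_unique[symmetric])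
  show "Comp C (proj C P A (length (map (proj C P A n) [1..<n+1])) j) (Id C (pow P A n))
      = map (proj C P A n) [1..<n+1] ! (j - 1)"
    if "1 \<le> j" "j \<le> length (map (proj C P A n) [1..<n+1])" for j
    using that comp_id_right[OF proj_hom[OF assms(1)]] by (simp add: nth_upt)
qed (use assms in \<open>auto simp: id_hom pow_obj proj_hom\<close>)

lemma p_arr_reduced_bar:
  assumes M: "M \<in> Obj C" and obj: "\<forall>n. Xo n = pow P M n"
    and arr: "\<forall>n m f. delta_arr n m f \<longrightarrow> Xa n m f = bar_arr C P M mu eta n m f"
  shows "p_arr C P Xo Xa n = Id C (Xo n)"
proof -
  consider "n = 0" | "n = 1" | "2 \<le> n" by linarith
  then show ?thesis
  proof cases
    case 1
    then show ?thesis using obj bang_unique[OF id_hom[OF term_obj]] unfolding p_arr_def by simp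
  next
    case 2
    then show ?thesis unfolding p_arr_def by simp
  next
    case 3
    have edges: "map (\<lambda>j. Xa 1 n (simplex_edge (j - 1) j)) [1..<n+1] = map (proj C P M n) [1..<n+1]"
    proof (rule map_cong)
      fix j assume "j \<in> set [1..<n+1]"
      then have j: "j - 1 \<le> j" "j \<le> n" and "Suc (j - 1) = j" by auto
      then show "Xa 1 n (simplex_edge (j - 1) j) = proj C P M n j"
        using arr delta_arr_simplex_edge[OF j] bar_arr_simplex_edge[OF j, of C P M mu eta]
        by (simp add: upt_conv_Cons)
    qed simp
    have "p_arr C P Xo Xa n = tuple P (pow P M n) (map (proj C P M n) [1..<n+1])"
      using p_arr_eq_tuple[OF 3, of C P Xo Xa, unfolded edges] obj by simp
    then show ?thesis using tuple_projs[OF M] 3 obj by simp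
  qed
qed

end

locale strict_cartesian_category =
  fixes C :: "('o,'a) category" and P :: "('o,'a) products"
  assumes strict: "strict_cartesian C P"
begin

sublocale cartesian_category C P
  using strict unfolding strict_cartesian_def by unfold_locales blast+

lemma prod_assoc_projs:
  assumes A: "A \<in> Obj C" and B: "B \<in> Obj C" and D: "D \<in> Obj C"
  shows "Pr1 P (Prod P A B) D = Pair P (Pr1 P A (Prod P B D)) (Comp C (Pr1 P B D) (Pr2 P A (Prod P B D)))"
    and "Pr2 P (Prod P A B) D = Comp C (Pr2 P B D) (Pr2 P A (Prod P B D))"
proof -
  let ?AB = "Prod P A B" and ?BD = "Prod P B D"
  define a where "a = Comp C (Pr1 P A B) (Pr1 P ?AB D)"
  define b where "b = Comp C (Pr2 P A B) (Pr1 P ?AB D)"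
  define c where "c = Pr2 P ?AB D"
  have obj: "?AB \<in> Obj C" "?BD \<in> Obj C" using A B D by (auto simp: prod_obj)
  have eq: "Prod P ?AB D = Prod P A ?BD" and alpha: "Pair P a (Pair P b c) = Id C (Prod P ?AB D)"
    using strict A B D unfolding strict_cartesian_def a_def b_def c_def by auto
  have pr1: "Pr1 P ?AB D \<in> hom C (Prod P A ?BD) ?AB"
    using pr1_hom[OF obj(1) D] eq by simp
  have abc: "a \<in> hom C (Prod P A ?BD) A" "b \<in> hom C (Prod P A ?BD) B" "c \<in> hom C (Prod P A ?BD) D"
    unfolding a_def b_def c_def using pr1 pr1_hom[OF A B] pr2_hom[OF A B] pr2_hom[OF obj(1) D] eq
    by (auto intro: comp_hom)
  have bc: "Pair P b c \<in> hom C (Prod P A ?BD) ?BD" using pair_hom[OF abc(2,3)] .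
  have "Pr1 P A ?BD = Comp C (Pr1 P A ?BD) (Pair P a (Pair P b c))"
    using alpha eq comp_id_right[OF pr1_hom[OF A obj(2)]] by simp
  then have pr1_a: "Pr1 P A ?BD = a" using pr1_pair[OF abc(1) bc] by simp
  have "Pr2 P A ?BD = Comp C (Pr2 P A ?BD) (Pair P a (Pair P b c))"
    using alpha eq comp_id_right[OF pr2_hom[OF A obj(2)]] by simp
  then have pr2_bc: "Pr2 P A ?BD = Pair P b c" using pr2_pair[OF abc(1) bc] by simp
  show "Pr2 P ?AB D = Comp C (Pr2 P B D) (Pr2 P A ?BD)"
    using pr2_bc pr2_pair[OF abc(2,3)] unfolding c_def by simp
  have "Pr1 P ?AB D = Pair P a b"
    using pair_expand[OF pr1 A B] unfolding a_def b_def .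
  then show "Pr1 P ?AB D = Pair P (Pr1 P A ?BD) (Comp C (Pr1 P B D) (Pr2 P A ?BD))"
    using pr1_a pr2_bc pr1_pair[OF abc(2,3)] by simp
qed

lemma proj_pow3:
  assumes "M \<in> Obj C"
  shows "proj C P M 3 1 = Pr1 P M (Prod P M M)"
    and "proj C P M 3 2 = Comp C (Pr1 P M M) (Pr2 P M (Prod P M M))"
    and "proj C P M 3 3 = Comp C (Pr2 P M M) (Pr2 P M (Prod P M M))"
  using comp_id_left[OF pr2_hom[OF assms assms]] by (simp_all add: numeral_3_eq_3 numeral_2_eq_2)

lemma prod_arr_binary_id:
  assumes M: "M \<in> Obj C" and f: "f \<in> hom C (Prod P M M) M"
  shows "prod_arr C P f (Id C M)
    = Pair P (Comp C f (Pair P (proj C P M 3 1) (proj C P M 3 2))) (proj C P M 3 3)"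
proof -
  have "Dom C f = Prod P M M" "Dom C (Id C M) = M" using f id_hom[OF M] by (auto simp: hom_def)
  moreover have "Comp C (Id C M) (Pr2 P (Prod P M M) M) = Pr2 P (Prod P M M) M"
    using comp_id_left pr2_hom[OF prod_obj[OF M M] M] by blast
  ultimately show ?thesis
    unfolding prod_arr_def proj_pow3[OF M] by (simp add: prod_assoc_projs[OF M M M])
qed

lemma prod_arr_id_binary:
  assumes M: "M \<in> Obj C" and f: "f \<in> hom C (Prod P M M) M"
  shows "prod_arr C P (Id C M) f
    = Pair P (proj C P M 3 1) (Comp C f (Pair P (proj C P M 3 2) (proj C P M 3 3)))"
proof -
  have "Dom C f = Prod P M M" "Dom C (Id C M) = M" using f id_hom[OF M] by (auto simp: hom_def)
  moreover have "Comp C (Id C M) (Pr1 P M (Prod P M M)) = Pr1 P M (Prod P M M)"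
    using comp_id_left pr1_hom[OF M prod_obj[OF M M]] by blast
  moreover have "Pr2 P M (Prod P M M)
      = Pair P (Comp C (Pr1 P M M) (Pr2 P M (Prod P M M))) (Comp C (Pr2 P M M) (Pr2 P M (Prod P M M)))"
    using pair_expand pr2_hom M prod_obj by blast
  ultimately show ?thesis
    unfolding prod_arr_def proj_pow3[OF M] by simp
qed

lemma terminal_unit_projs:
  assumes M: "M \<in> Obj C"
  shows "Prod P M (Term P) = M" "Pr1 P M (Term P) = Id C M" "Pr2 P M (Term P) = Bang P M"
    and "Prod P (Term P) M = M" "Pr2 P (Term P) M = Id C M" "Pr1 P (Term P) M = Bang P M"
proof -
  show units: "Prod P M (Term P) = M" "Pr1 P M (Term P) = Id C M"
    "Prod P (Term P) M = M" "Pr2 P (Term P) M = Id C M"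
    using strict M unfolding strict_cartesian_def by auto
  show "Pr2 P M (Term P) = Bang P M"
    using pr2_hom[OF M term_obj] units by (intro bang_unique) simp
  show "Pr1 P (Term P) M = Bang P M"
    using pr1_hom[OF term_obj M] units by (intro bang_unique) simp
qed

lemma prod_arr_id_point:
  assumes M: "M \<in> Obj C" and e: "e \<in> hom C (Term P) M"
  shows "prod_arr C P (Id C M) e = Pair P (Id C M) (Comp C e (Bang P M))"
proof -
  have "Dom C e = Term P" "Dom C (Id C M) = M" using e id_hom[OF M] by (auto simp: hom_def)
  then show ?thesis
    unfolding prod_arr_def using comp_id_left[OF id_hom[OF M]] by (simp add: terminal_unit_projs[OF M])
qed

lemma prod_arr_point_id:
  assumes M: "M \<in> Obj C" and e: "e \<in> hom C (Term P) M"
  shows "prod_arr C P e (Id C M) = Pair P (Comp C e (Bang P M)) (Id C M)"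
proof -
  have "Dom C e = Term P" "Dom C (Id C M) = M" using e id_hom[OF M] by (auto simp: hom_def)
  then show ?thesis
    unfolding prod_arr_def using comp_id_left[OF id_hom[OF M]] by (simp add: terminal_unit_projs[OF M])
qed

end

locale strict_segal_object = strict_cartesian_category +
  fixes Xo :: "nat \<Rightarrow> 'o" and Xa :: "nat \<Rightarrow> nat \<Rightarrow> (nat \<Rightarrow> nat) \<Rightarrow> 'a"
  assumes simplicial: "simplicial_object C Xo Xa"
    and spine_id: "\<forall>n. Xo n = pow P (Xo 1) n \<and> p_arr C P Xo Xa n = Id C (Xo n)"
begin

abbreviation "M \<equiv> Xo 1"
abbreviation "mu \<equiv> Xa 1 2 (simplex_edge 0 2)"
abbreviation "eta \<equiv> Xa 1 0 (simplex_edge 0 0)"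

lemma M_obj: "M \<in> Obj C"
  using simplicial unfolding simplicial_object_def by blast

lemma X_obj: "Xo n = pow P M n"
  using spine_id by blast

lemma p_arr_id: "p_arr C P Xo Xa n = Id C (pow P M n)"
  using spine_id X_obj by metis

lemma X_hom: "delta_arr n m f \<Longrightarrow> Xa n m f \<in> hom C (pow P M m) (pow P M n)"
  using simplicial X_obj unfolding simplicial_object_def by metis

lemma X_cong: "delta_arr n m f \<Longrightarrow> (\<forall>i\<le>n. f i = g i) \<Longrightarrow> Xa n m f = Xa n m g"
  using simplicial unfolding simplicial_object_def by blast

lemma X_id: "Xa n n id = Id C (pow P M n)"
  using simplicial X_obj unfolding simplicial_object_def by metis

lemma X_comp: "delta_arr n m f \<Longrightarrow> delta_arr m k g \<Longrightarrow> Xa n k (g \<circ> f) = Comp C (Xa n m f) (Xa m k g)"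
  using simplicial unfolding simplicial_object_def by blast

lemma X_spine_edge:
  assumes j: "1 \<le> j" "j \<le> n"
  shows "Xa 1 n (simplex_edge (j - 1) j) = proj C P M n j"
proof (cases "n = 1")
  case True
  with j have "j = 1" by simp
  have "Xa 1 1 (simplex_edge 0 1) = Xa 1 1 id"
    by (intro X_cong delta_arr_simplex_edge) (auto simp: simplex_edge_def le_Suc_eq)
  then show ?thesis using True \<open>j = 1\<close> X_id[of 1] by simp
next
  case False
  let ?edges = "map (\<lambda>j. Xa 1 n (simplex_edge (j - 1) j)) [1..<n+1]"
  have edges: "\<forall>g\<in>set ?edges. g \<in> hom C (pow P M n) M"
  proof
    fix g assume "g \<in> set ?edges"
    then obtain i where "1 \<le> i" "i \<le> n" "g = Xa 1 n (simplex_edge (i - 1) i)" by auto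
    then show "g \<in> hom C (pow P M n) M"
      using X_hom[OF delta_arr_simplex_edge, of "i - 1" i n] by simp
  qed
  have "tuple P (pow P M n) ?edges = Id C (pow P M n)"
    using p_arr_id p_arr_eq_tuple[of n C P Xo Xa] False j X_obj[of n] by simp
  then have "proj C P M n j = Comp C (proj C P M n j) (tuple P (pow P M n) ?edges)"
    using comp_id_right[OF proj_hom[OF M_obj j]] by simp
  also have "\<dots> = ?edges ! (j - 1)"
    using proj_tuple[OF edges M_obj, of j] j by (simp del: nth_map)
  also have "\<dots> = Xa 1 n (simplex_edge (j - 1) j)"
    using j by (subst nth_map) (auto simp: nth_upt)
  finally show ?thesis ..
qed

lemma X_arr_tuple:
  assumes n: "1 \<le> n" and f: "delta_arr n m f"
  shows "Xa n m f = tuple P (pow P M m) (map (\<lambda>j. Xa 1 m (simplex_edge (f (j - 1)) (f j))) [1..<n+1])"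
proof (rule tuple_unique)
  let ?edges = "map (\<lambda>j. Xa 1 m (simplex_edge (f (j - 1)) (f j))) [1..<n+1]"
  have edge: "delta_arr 1 m (simplex_edge (f (j - 1)) (f j))" if "1 \<le> j" "j \<le> n" for j
    using delta_arr_comp[OF delta_arr_simplex_edge f, of "j - 1" j] that by (simp add: comp_simplex_edge)
  show "\<forall>g\<in>set ?edges. g \<in> hom C (pow P M m) M"
    using X_hom[OF edge] by fastforce
  show "Xa n m f \<in> hom C (pow P M m) (pow P M (length ?edges))"
    using X_hom[OF f] by simp
  show "Comp C (proj C P M (length ?edges) j) (Xa n m f) = ?edges ! (j - 1)"
    if "1 \<le> j" "j \<le> length ?edges" for j
  proof -
    have j: "1 \<le> j" "j \<le> n" using that by auto
    have "Comp C (proj C P M n j) (Xa n m f) = Xa 1 m (simplex_edge (f (j - 1)) (f j))"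
      using X_comp[OF delta_arr_simplex_edge f, of "j - 1" j] X_spine_edge[OF j] j
      by (simp add: comp_simplex_edge)
    also have "\<dots> = ?edges ! (j - 1)"
      using j by (subst nth_map) (auto simp: nth_upt)
    finally show ?thesis using j by (simp del: nth_map)
  qed
qed (use n M_obj in auto)

lemma X_arr_pair:
  "delta_arr 2 m f \<Longrightarrow>
   Xa 2 m f = Pair P (Xa 1 m (simplex_edge (f 0) (f 1))) (Xa 1 m (simplex_edge (f 1) (f 2)))"
  using X_arr_tuple[of 2 m f] by (simp add: upt_rec numeral_2_eq_2)

lemma X_simplex_edge:
  assumes "u \<le> v" "v \<le> m"
  shows "Xa 1 m (simplex_edge u v) = mprod C P mu eta (pow P M m) (map (proj C P M m) [Suc u..<Suc v])"
  using assms
proof (induction "v - u" arbitrary: u v rule: less_induct)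
  case less
  consider "v = u" | "v = Suc u" | "Suc (Suc u) \<le> v" using less.prems by linarith
  then show ?case
  proof cases
    case 1
    have const: "delta_arr 0 m (\<lambda>_. u)" using less.prems by (simp add: delta_arr_def)
    have "simplex_edge u v = (\<lambda>_. u) \<circ> simplex_edge 0 0" using 1 by (simp add: comp_simplex_edge)
    then have "Xa 1 m (simplex_edge u v) = Comp C eta (Xa 0 m (\<lambda>_. u))"
      using X_comp[OF delta_arr_simplex_edge const] by simp
    moreover have "Xa 0 m (\<lambda>_. u) = Bang P (pow P M m)"
      using X_hom[OF const] by (intro bang_unique) simp
    ultimately show ?thesis using 1 by simp
  next
    case 2
    then show ?thesis using X_spine_edge[of v m] less.prems by (simp add: upt_conv_Cons)
  next
    case 3
    \<comment> \<open>the edge is the inner face of the 2-simplex \<open>(u, u+1, v)\<close>\<close>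
    define g where "g = (!) [u, Suc u, v]"
    have g: "delta_arr 2 m g"
      using 3 less.prems unfolding delta_arr_def g_def by (auto simp: nth_Cons' le_Suc_eq numeral_2_eq_2)
    have "simplex_edge u v = g \<circ> simplex_edge 0 2" by (simp add: comp_simplex_edge g_def)
    then have "Xa 1 m (simplex_edge u v) = Comp C mu (Xa 2 m g)"
      using X_comp[OF delta_arr_simplex_edge g, of 0 2] by simp
    also have "Xa 2 m g = Pair P (Xa 1 m (simplex_edge u (Suc u))) (Xa 1 m (simplex_edge (Suc u) v))"
      using X_arr_pair[OF g] by (simp add: g_def)
    also have "Xa 1 m (simplex_edge u (Suc u)) = proj C P M m (Suc u)"
      using X_spine_edge[of "Suc u" m] 3 less.prems by simp
    also have "Xa 1 m (simplex_edge (Suc u) v)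
        = mprod C P mu eta (pow P M m) (map (proj C P M m) [Suc (Suc u)..<Suc v])"
      using 3 less.prems by (intro less.hyps) auto
    finally show ?thesis using 3 by (simp add: upt_conv_Cons)
  qed
qed

lemma X_eq_bar_arr:
  assumes f: "delta_arr n m f"
  shows "Xa n m f = bar_arr C P M mu eta n m f"
proof (cases "n = 0")
  case True
  then have "Xa n m f = Bang P (pow P M m)"
    using X_hom[OF f] by (intro bang_unique) simp
  then show ?thesis using True unfolding bar_arr_def by simp
next
  case False
  have edges: "map (\<lambda>j. Xa 1 m (simplex_edge (f (j - 1)) (f j))) [1..<n+1]
      = map (\<lambda>j. mprod C P mu eta (pow P M m) (map (proj C P M m) [Suc (f (j - 1))..<Suc (f j)])) [1..<n+1]"
  proof (rule map_cong)
    fix j assume "j \<in> set [1..<n+1]"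
    then have "f (j - 1) \<le> f j" "f j \<le> m" using f unfolding delta_arr_def by auto
    then show "Xa 1 m (simplex_edge (f (j - 1)) (f j))
        = mprod C P mu eta (pow P M m) (map (proj C P M m) [Suc (f (j - 1))..<Suc (f j)])"
      by (rule X_simplex_edge)
  qed simp
  then show ?thesis
    unfolding bar_arr_eq_intervals[OF f] using X_arr_tuple[OF _ f, unfolded edges] False by simp
qed

lemma mu_comp_X:
  "delta_arr 2 m g \<Longrightarrow> Comp C mu (Xa 2 m g) = Xa 1 m (simplex_edge (g 0) (g 2))"
  using X_comp[OF delta_arr_simplex_edge, of 0 2 2 m g] by (simp add: comp_simplex_edge)

lemma is_monoid: "is_monoid C P M mu eta"
proof -
  have M: "M \<in> Obj C" by (rule M_obj)
  have mu: "mu \<in> hom C (Prod P M M) M"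
    using X_hom[OF delta_arr_simplex_edge, of 0 2 2] by (simp add: numeral_2_eq_2)
  have eta: "eta \<in> hom C (Term P) M"
    using X_hom[OF delta_arr_simplex_edge, of 0 0 0] by simp
  have deltas: "delta_arr 2 3 ((!) [0, 2, 3])" "delta_arr 2 3 ((!) [0, 1, 3])"
    "delta_arr 2 1 ((!) [0, 1, 1])" "delta_arr 2 1 ((!) [0, 0, 1])"
    unfolding delta_arr_def by (auto simp: nth_Cons' le_Suc_eq numeral_2_eq_2 numeral_3_eq_3)
  have edges3: "Xa 1 3 (simplex_edge 0 2) = Comp C mu (Pair P (proj C P M 3 1) (proj C P M 3 2))"
    "Xa 1 3 (simplex_edge 1 3) = Comp C mu (Pair P (proj C P M 3 2) (proj C P M 3 3))"
    "Xa 1 3 (simplex_edge 0 1) = proj C P M 3 1" "Xa 1 3 (simplex_edge 2 3) = proj C P M 3 3"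
    using X_simplex_edge[of 0 2 3] X_simplex_edge[of 1 3 3] X_spine_edge[of 1 3] X_spine_edge[of 3 3]
    by (simp_all add: upt_rec numeral_2_eq_2 numeral_3_eq_3)
  have edges1: "Xa 1 1 (simplex_edge 0 1) = Id C M" "Xa 1 1 (simplex_edge 0 0) = Comp C eta (Bang P M)"
    "Xa 1 1 (simplex_edge 1 1) = Comp C eta (Bang P M)"
    using X_spine_edge[of 1 1] X_simplex_edge[of 0 0 1] X_simplex_edge[of 1 1 1] by simp_all
  have "Comp C mu (prod_arr C P mu (Id C M)) = Comp C mu (Xa 2 3 ((!) [0, 2, 3]))"
    using X_arr_pair[OF deltas(1)] edges3 prod_arr_binary_id[OF M mu] by simp
  also have "\<dots> = Comp C mu (Xa 2 3 ((!) [0, 1, 3]))"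
    using mu_comp_X[OF deltas(1)] mu_comp_X[OF deltas(2)] by simp
  also have "\<dots> = Comp C mu (prod_arr C P (Id C M) mu)"
    using X_arr_pair[OF deltas(2)] edges3 prod_arr_id_binary[OF M mu] by simp
  finally have assoc: "Comp C mu (prod_arr C P mu (Id C M)) = Comp C mu (prod_arr C P (Id C M) mu)" .
  have "Comp C mu (prod_arr C P (Id C M) eta) = Comp C mu (Xa 2 1 ((!) [0, 1, 1]))"
    using X_arr_pair[OF deltas(3)] edges1 prod_arr_id_point[OF M eta] by simp
  also have "\<dots> = Id C M"
    using mu_comp_X[OF deltas(3)] edges1 by simp
  finally have unit_right: "Comp C mu (prod_arr C P (Id C M) eta) = Id C M" .
  have "Comp C mu (prod_arr C P eta (Id C M)) = Comp C mu (Xa 2 1 ((!) [0, 0, 1]))"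
    using X_arr_pair[OF deltas(4)] edges1 prod_arr_point_id[OF M eta] by simp
  also have "\<dots> = Id C M"
    using mu_comp_X[OF deltas(4)] edges1 by simp
  finally have unit_left: "Comp C mu (prod_arr C P eta (Id C M)) = Id C M" .
  show ?thesis
    unfolding is_monoid_def using M mu eta assoc unit_left unit_right by simp
qed

end

theorem proposition2p4:
  fixes C :: "('o,'a) category" and P :: "('o,'a) products"
    and Xo :: "nat \<Rightarrow> 'o" and Xa :: "nat \<Rightarrow> nat \<Rightarrow> (nat \<Rightarrow> nat) \<Rightarrow> 'a"
  assumes "strict_cartesian C P"
    and "simplicial_object C Xo Xa"
  shows "is_reduced_bar C P Xo Xa \<longleftrightarrow>
           (\<forall>n. Xo n = pow P (Xo 1) n \<and> p_arr C P Xo Xa n = Id C (Xo n))"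
proof
  interpret strict_cartesian_category C P by unfold_locales (fact assms(1))
  assume "is_reduced_bar C P Xo Xa"
  then obtain M mu eta where monoid: "is_monoid C P M mu eta" and obj: "\<forall>n. Xo n = pow P M n"
    and arr: "\<forall>n m f. delta_arr n m f \<longrightarrow> Xa n m f = bar_arr C P M mu eta n m f"
    unfolding is_reduced_bar_def by blast
  have M: "M \<in> Obj C" using monoid unfolding is_monoid_def by blast
  have "Xo n = pow P (Xo 1) n" for n using obj by simp
  then show "\<forall>n. Xo n = pow P (Xo 1) n \<and> p_arr C P Xo Xa n = Id C (Xo n)"
    using p_arr_reduced_bar[OF M obj arr] by blast
next
  assume "\<forall>n. Xo n = pow P (Xo 1) n \<and> p_arr C P Xo Xa n = Id C (Xo n)"
  then interpret strict_segal_object C P Xo Xa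
    using assms by unfold_locales
  show "is_reduced_bar C P Xo Xa"
    unfolding is_reduced_bar_def using is_monoid X_obj X_eq_bar_arr by blast
qed

end
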